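(* Let $\varepsilon>0$, $0<\kappa<1$, and $M\ge0$. Let $\{a_n\}_{n=1}^\infty$ and $\{b_n\}_{n=1}^\infty$ be sequences of positive integers such that $\{a_n\}$ is non-decreasing and $\limsup_{n\to\infty}a_n^{(M+2)^{-n}}=\infty$. Suppose that for all sufficiently large $n$, $a_n\ge n^{1+\varepsilon}$ and $b_n\le 2^{(\log_2 a_n)^\kappa}$. Then for any fixed $0<c<1$, \[\liminf_{N\to\infty}2^{N^2(\log_2 a_{N-1})^c}\Big(\prod_{n=1}^{N-1}a_n\Big)^{M+1}\sum_{n=N}^\infty\Big|\frac{b_n}{a_n}\Big|=0.\] *)

theory Defs
  imports "HOL-Analysis.Analysis"
begin

end

theory Submission
  imports Defs "HOL-Real_Asymp.Real_Asymp"
begin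

text \<open>
  Write \<open>A n = log 2 (a n)\<close>, \<open>S N = A 1 + \<dots> + A N\<close>, and let \<open>2 powr F N\<close> be the weight in front
  of the tail \<open>T N = (\<Sum>n\<ge>N. b n / a n)\<close>. Suppose, contrary to the claim, that
  \<open>2 powr F N * T N > \<delta> > 0\<close> for all large \<open>N\<close>. Since \<open>b n \<le> 2 powr (A n powr \<kappa>)\<close> and
  \<open>A n \<ge> (1 + \<epsilon>) log 2 n\<close>, the terms of the tail are at most \<open>2 powr (- \<theta> A n) * n powr - q\<close> with
  \<open>q > 1\<close>, so \<open>T N = O(2 powr (- \<theta> A N))\<close> and therefore \<open>\<theta> A N \<le> F N + C\<close>: \<open>A N\<close> is
  controlled by \<open>F N\<close>, which is essentially \<open>(M + 1) S (N - 1)\<close>.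

  Normalise by \<open>L = M + 2\<close>: \<open>R N = S N / L ^ N\<close>, \<open>r N = A N / L ^ N\<close>. Unless \<open>N\<close> is a jump, i.e.
  \<open>A N\<close> exceeds \<open>F N\<close> by a large margin, this yields \<open>R N \<le> (1 + \<beta> N) R (N - 1) + \<gamma> N\<close> with
  summable \<open>\<beta>\<close>, \<open>\<gamma>\<close>. At a jump, the terms \<open>b n / a n\<close> with \<open>n \<ge> N\<close> and \<open>A n < 2/\<theta> A N\<close> are tiny
  and the rest of the tail is tinier, so the lower bound on \<open>T N\<close> forces this block
  \<open>N..m N - 1\<close> to be long; along it \<open>S\<close> grows by at most its length times \<open>2/\<theta> A N\<close>, which the
  factor \<open>L ^ length\<close> makes negligible, so \<open>R\<close> is back below \<open>R (N - 1) + \<gamma> N\<close> at the end of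
  the block. Hence \<open>R\<close> and \<open>r\<close> stay bounded, i.e. \<open>a n powr (L powr - n)\<close> is bounded, contradicting
  the limsup hypothesis.
\<close>

lemma powr_le_linear_plus_powr:
  fixes x y e :: real
  assumes "0 \<le> x" "0 < y" "0 < e" "e < 1"
  shows "x powr e \<le> x * y powr (e - 1) + y powr e"
proof (cases "x \<le> y")
  case True
  then have "x powr e \<le> y powr e" using assms by (simp add: powr_mono2)
  moreover have "0 \<le> x * y powr (e - 1)" using assms(1) by simp
  ultimately show ?thesis by linarith
next
  case False
  then have "x powr e = x * x powr (e - 1)" using assms by (simp add: powr_diff)
  also have "\<dots> \<le> x * y powr (e - 1)"
    using False assms by (intro mult_left_mono powr_mono2') auto
  finally show ?thesis using powr_ge_zero[of y e] by linarith
qed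

lemma powr_div_le:
  fixes x y e :: real
  assumes "0 \<le> x" "0 < y" "0 < e" "e < 1"
  shows "x powr e / y \<le> (x / y + 1) * y powr (e - 1)"
proof -
  have "x powr e / y \<le> (x * y powr (e - 1) + y powr e) / y"
    using assms(2) by (intro divide_right_mono powr_le_linear_plus_powr[OF assms]) simp
  also have "\<dots> = (x / y + 1) * y powr (e - 1)"
    using assms(2) by (simp add: powr_diff field_simps)
  finally show ?thesis .
qed

lemma power_powr_eq_powr_power:
  fixes x e :: real
  assumes "0 < x"
  shows "(x ^ n) powr e = (x powr e) ^ n"
  using assms by (simp add: powr_power powr_realpow[symmetric] powr_powr mult.commute)

lemma summable_power_mult_geometric:
  fixes x :: real
  assumes "0 < x" "x < 1"
  shows "summable (\<lambda>n. real n ^ k * x ^ n)"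
proof (rule summable_comparison_test_bigo)
  show "summable (\<lambda>n. norm (real n powr (-2)))"
    using summable_real_powr_iff[of "-2"] by simp
  show "(\<lambda>n. real n ^ k * x ^ n) \<in> O(\<lambda>n. real n powr (-2))"
    using assms by real_asymp
qed

lemma liminf_ennreal_pos_imp_eventually_gt:
  fixes f :: "nat \<Rightarrow> real"
  assumes "liminf (\<lambda>N. ennreal (f N)) \<noteq> 0"
  obtains \<delta> where "0 < \<delta>" "\<forall>\<^sub>F N in sequentially. \<delta> < f N"
proof -
  obtain y where y: "0 < y" "y < liminf (\<lambda>N. ennreal (f N))"
    using assms dense not_gr_zero by blast
  then obtain \<delta> where \<delta>: "y = ennreal \<delta>" "0 \<le> \<delta>"
    using order.strict_trans2[OF y(2) top_greatest] unfolding less_top_ennreal by auto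
  have "\<forall>\<^sub>F N in sequentially. ennreal \<delta> < ennreal (f N)"
    using less_LiminfD[OF y(2)[unfolded \<delta>(1)]] .
  then have "\<forall>\<^sub>F N in sequentially. \<delta> < f N"
    by eventually_elim (use \<delta> in \<open>simp add: ennreal_less_iff\<close>)
  with that show ?thesis using y \<delta> by simp
qed

section \<open>Perturbed linear recurrences with jumps\<close>

lemma summable_recurrence_bounded_supersolution:
  fixes \<beta> \<gamma> :: "nat \<Rightarrow> real"
  assumes \<beta>: "\<And>n. 0 \<le> \<beta> n" "summable \<beta>" and \<gamma>: "\<And>n. 0 \<le> \<gamma> n" "summable \<gamma>"
    and "0 \<le> x"
  obtains U B where "U n\<^sub>0 = x" "\<And>n. 0 \<le> U n" "\<And>n. U n \<le> B" "mono U"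
    and "\<And>n. n\<^sub>0 < n \<Longrightarrow> (1 + \<beta> n) * U (n - 1) + \<gamma> n \<le> U n"
proof -
  define P where "P n = (\<Prod>j\<in>{n\<^sub>0<..n}. 1 + \<beta> j)" for n
  define G where "G n = x + (\<Sum>j\<in>{n\<^sub>0<..n}. \<gamma> j)" for n
  have P_ge_1: "1 \<le> P n" for n
    unfolding P_def by (rule prod_ge_1) (use \<beta> in auto)
  have P_le: "P n \<le> exp (suminf \<beta>)" for n
  proof -
    have "P n \<le> (\<Prod>j\<in>{n\<^sub>0<..n}. exp (\<beta> j))"
      unfolding P_def by (rule prod_mono) (use \<beta> in \<open>auto intro: add_nonneg_nonneg\<close>)
    also have "\<dots> = exp (\<Sum>j\<in>{n\<^sub>0<..n}. \<beta> j)" by (simp add: exp_sum)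
    also have "\<dots> \<le> exp (suminf \<beta>)" using \<beta> by (simp add: sum_le_suminf)
    finally show ?thesis .
  qed
  have G: "x \<le> G n" "G n \<le> x + suminf \<gamma>" for n
    using \<gamma> by (simp_all add: G_def sum_nonneg sum_le_suminf)
  show ?thesis
  proof (rule that[of "\<lambda>n. G n * P n" "(x + suminf \<gamma>) * exp (suminf \<beta>)"])
    show "G n\<^sub>0 * P n\<^sub>0 = x" by (simp add: G_def P_def)
    show "0 \<le> G n * P n" for n
      using G(1)[of n] P_ge_1[of n] \<open>0 \<le> x\<close> by (intro mult_nonneg_nonneg) auto
    show "G n * P n \<le> (x + suminf \<gamma>) * exp (suminf \<beta>)" for n
      using G[of n] P_le[of n] P_ge_1[of n] \<open>0 \<le> x\<close> by (intro mult_mono) auto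
    show "mono (\<lambda>n. G n * P n)"
    proof (rule monoI)
      fix i j :: nat assume "i \<le> j"
      then have sub: "{n\<^sub>0<..i} \<subseteq> {n\<^sub>0<..j}" by auto
      have "G i \<le> G j" unfolding G_def using sub \<gamma>(1) by (intro add_left_mono sum_mono2) auto
      moreover have "P i \<le> P j" unfolding P_def using sub \<beta>(1) by (intro prod_mono2) auto
      ultimately show "G i * P i \<le> G j * P j"
        using G(1)[of j] P_ge_1[of i] \<open>0 \<le> x\<close> by (intro mult_mono) auto
    qed
    show "(1 + \<beta> n) * (G (n - 1) * P (n - 1)) + \<gamma> n \<le> G n * P n" if "n\<^sub>0 < n" for n
    proof -
      have "{n\<^sub>0<..n} = insert n {n\<^sub>0<..n - 1}" using that by auto
      then have "P n = (1 + \<beta> n) * P (n - 1)" "G n = G (n - 1) + \<gamma> n"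
        using that by (simp_all add: P_def G_def)
      moreover have "\<gamma> n \<le> \<gamma> n * P n" using \<gamma>(1)[of n] P_ge_1[of n] by (simp add: mult_le_cancel_left1)
      ultimately show ?thesis by (simp add: algebra_simps)
    qed
  qed
qed

lemma below_supersolution_outside_jumps:
  fixes R U \<beta> \<gamma> :: "nat \<Rightarrow> real" and m :: "nat \<Rightarrow> nat" and jump :: "nat \<Rightarrow> bool"
  assumes "R n\<^sub>0 \<le> U n\<^sub>0" and U: "\<And>n. 0 \<le> U n" "mono U" and \<beta>: "\<And>n. 0 \<le> \<beta> n"
    and U_step: "\<And>n. n\<^sub>0 < n \<Longrightarrow> (1 + \<beta> n) * U (n - 1) + \<gamma> n \<le> U n"
    and R_step: "\<And>N. n\<^sub>0 < N \<Longrightarrow> \<not> jump N \<Longrightarrow> R N \<le> (1 + \<beta> N) * R (N - 1) + \<gamma> N"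
    and jump_long: "\<And>N. n\<^sub>0 < N \<Longrightarrow> jump N \<Longrightarrow> N + 2 \<le> m N"
    and jump_end: "\<And>N. n\<^sub>0 < N \<Longrightarrow> jump N \<Longrightarrow> R (m N - 1) \<le> R (N - 1) + \<gamma> N"
    and "n\<^sub>0 \<le> n"
  shows "R n \<le> U n \<or> (\<exists>N. n\<^sub>0 < N \<and> N \<le> n \<and> n < m N - 1 \<and> jump N \<and> R (N - 1) \<le> U (N - 1))"
    (is "_ \<or> ?inside n")
  using \<open>n\<^sub>0 \<le> n\<close>
proof (induction n rule: dec_induct)
  case base
  then show ?case using \<open>R n\<^sub>0 \<le> U n\<^sub>0\<close> by simp
next
  case (step k)
  then have k: "n\<^sub>0 < Suc k" by simp
  from step.IH show ?case
  proof
    assume Rk: "R k \<le> U k"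
    show ?case
    proof (cases "jump (Suc k)")
      case True
      then have "?inside (Suc k)" using jump_long[OF k True] Rk k by (intro exI[of _ "Suc k"]) simp
      then show ?thesis ..
    next
      case False
      have "R (Suc k) \<le> (1 + \<beta> (Suc k)) * R k + \<gamma> (Suc k)" using R_step[OF k False] by simp
      also have "\<dots> \<le> (1 + \<beta> (Suc k)) * U k + \<gamma> (Suc k)"
        using Rk \<beta>[of "Suc k"] by (simp add: mult_left_mono)
      also have "\<dots> \<le> U (Suc k)" using U_step[OF k] by simp
      finally show ?thesis ..
    qed
  next
    assume "?inside k"
    then obtain N where N: "n\<^sub>0 < N" "N \<le> k" "k < m N - 1" "jump N" "R (N - 1) \<le> U (N - 1)"
      by blast
    show ?case
    proof (cases "Suc k < m N - 1")
      case True
      then have "?inside (Suc k)" using N by (intro exI[of _ N]) simp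
      then show ?thesis ..
    next
      case False
      then have "Suc k = m N - 1" using N(3) by simp
      then have "R (Suc k) \<le> R (N - 1) + \<gamma> N" using jump_end[OF N(1,4)] by simp
      also have "\<dots> \<le> (1 + \<beta> N) * U (N - 1) + \<gamma> N"
        using N(5) mult_nonneg_nonneg[OF \<beta> U(1), of N "N - 1"] by (simp add: distrib_right)
      also have "\<dots> \<le> U (Suc k)"
        using U_step[OF N(1)] monoD[OF U(2), of N "Suc k"] N(2) by simp
      finally show ?thesis ..
    qed
  qed
qed

lemma bounded_if_recurrence_with_jumps:
  fixes R r \<beta> \<gamma> :: "nat \<Rightarrow> real" and m :: "nat \<Rightarrow> nat" and jump :: "nat \<Rightarrow> bool"
  assumes R: "\<And>n. 0 \<le> R n" and \<beta>: "\<And>n. 0 \<le> \<beta> n" "summable \<beta>"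
    and \<gamma>: "\<And>n. 0 \<le> \<gamma> n" "summable \<gamma>" and "0 \<le> C"
    and r_le_R: "\<And>n. n\<^sub>0 \<le> n \<Longrightarrow> r n \<le> R n"
    and R_step: "\<And>N. n\<^sub>0 < N \<Longrightarrow> \<not> jump N \<Longrightarrow> R N \<le> (1 + \<beta> N) * R (N - 1) + \<gamma> N"
    and jump_long: "\<And>N. n\<^sub>0 < N \<Longrightarrow> jump N \<Longrightarrow> N + 2 \<le> m N"
    and jump_end: "\<And>N. n\<^sub>0 < N \<Longrightarrow> jump N \<Longrightarrow> R (m N - 1) \<le> R (N - 1) + \<gamma> N"
    and jump_inside:
      "\<And>N n. n\<^sub>0 < N \<Longrightarrow> jump N \<Longrightarrow> N \<le> n \<Longrightarrow> n < m N \<Longrightarrow> r n \<le> C * R (N - 1) + D"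
  shows "\<exists>B. \<forall>n \<ge> n\<^sub>0. r n \<le> B"
proof -
  obtain U B where U: "U n\<^sub>0 = R n\<^sub>0" "\<And>n. 0 \<le> U n" "\<And>n. U n \<le> B" "mono U"
    and U_step: "\<And>n. n\<^sub>0 < n \<Longrightarrow> (1 + \<beta> n) * U (n - 1) + \<gamma> n \<le> U n"
    using summable_recurrence_bounded_supersolution[OF \<beta> \<gamma> R[of n\<^sub>0], where n\<^sub>0 = n\<^sub>0] by blast
  have "R n\<^sub>0 \<le> U n\<^sub>0" using U(1) by simp
  have "r n \<le> max B (C * B + D)" if "n\<^sub>0 \<le> n" for n
  proof -
    have "R n \<le> U n \<or> (\<exists>N. n\<^sub>0 < N \<and> N \<le> n \<and> n < m N - 1 \<and> jump N \<and> R (N - 1) \<le> U (N - 1))"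
      using \<open>R n\<^sub>0 \<le> U n\<^sub>0\<close> U(2,4) \<beta>(1)
      by (rule below_supersolution_outside_jumps) (use U_step R_step jump_long jump_end that in auto)
    then show ?thesis
    proof (elim disjE exE conjE)
      assume "R n \<le> U n"
      then show ?thesis using r_le_R[OF that] U(3)[of n] by simp
    next
      fix N assume N: "n\<^sub>0 < N" "N \<le> n" "n < m N - 1" "jump N" "R (N - 1) \<le> U (N - 1)"
      have "r n \<le> C * R (N - 1) + D" using jump_inside[OF N(1,4,2)] N(3) by simp
      also have "\<dots> \<le> C * B + D" using N(5) U(3)[of "N - 1"] \<open>0 \<le> C\<close> by (simp add: mult_left_mono)
      finally show ?thesis by simp
    qed
  qed
  then show ?thesis by blast
qed

section \<open>Tails of the series\<close>

locale sparse_series =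
  fixes \<epsilon> \<kappa> M c :: real and a b :: "nat \<Rightarrow> nat"
  assumes eps_pos: "0 < \<epsilon>" and kappa_pos: "0 < \<kappa>" and kappa_less_1: "\<kappa> < 1"
    and M_nonneg: "0 \<le> M" and c_pos: "0 < c" and c_less_1: "c < 1"
    and a_pos: "\<And>n. 1 \<le> n \<Longrightarrow> 0 < a n"
    and a_mono: "\<And>m n. 1 \<le> m \<Longrightarrow> m \<le> n \<Longrightarrow> a m \<le> a n"
    and a_growth: "\<forall>\<^sub>F n in sequentially. real n powr (1 + \<epsilon>) \<le> real (a n)"
    and b_bound: "\<forall>\<^sub>F n in sequentially. real (b n) \<le> 2 powr (log 2 (real (a n)) powr \<kappa>)"
begin

definition A :: "nat \<Rightarrow> real" where "A n = log 2 (real (a n))"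
definition S :: "nat \<Rightarrow> real" where "S n = (\<Sum>i=1..n. A i)"
definition F :: "nat \<Rightarrow> real" where "F N = real N ^ 2 * A (N - 1) powr c + (M + 1) * S (N - 1)"
definition t :: "nat \<Rightarrow> real" where "t n = real (b n) / real (a n)"
definition T :: "nat \<Rightarrow> real" where "T N = (\<Sum>k. t (N + k))"

lemma A_nonneg: "1 \<le> n \<Longrightarrow> 0 \<le> A n"
  using a_pos[of n] by (simp add: A_def)

lemma a_eq_powr_A: "1 \<le> n \<Longrightarrow> real (a n) = 2 powr A n"
  using a_pos[of n] by (simp add: A_def)

lemma A_mono: "1 \<le> m \<Longrightarrow> m \<le> n \<Longrightarrow> A m \<le> A n"
  using a_mono[of m n] a_pos[of m] by (simp add: A_def)

lemma A_ge_log: "\<forall>\<^sub>F n in sequentially. (1 + \<epsilon>) * log 2 (real n) \<le> A n"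
  using a_growth eventually_ge_at_top[of 1]
proof eventually_elim
  case (elim n)
  then have "log 2 (real n powr (1 + \<epsilon>)) \<le> A n"
    using a_pos[of n] unfolding A_def by (subst log_le_cancel_iff) auto
  then show ?case using elim by (simp add: log_powr)
qed

lemma A_at_top: "filterlim A at_top sequentially"
proof (rule filterlim_at_top_mono[OF _ A_ge_log])
  show "filterlim (\<lambda>n. (1 + \<epsilon>) * log 2 (real n)) at_top sequentially"
    using eps_pos by real_asymp
qed

text \<open>\<open>\<theta>\<close> is chosen so that \<open>q = (1 - 2\<theta>)(1 + \<epsilon>) = 1 + \<epsilon>/2 > 1\<close>: the factor
  \<open>2 powr (- \<theta> * A n)\<close> can be split off the terms \<open>t n\<close> while a summable factor remains.\<close>

definition \<theta> :: real where "\<theta> = \<epsilon> / (4 * (1 + \<epsilon>))"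
definition q :: real where "q = (1 - 2 * \<theta>) * (1 + \<epsilon>)"
definition Z :: real where "Z = (\<Sum>n. real n powr - q)"

lemma theta_pos: "0 < \<theta>" and theta_less: "\<theta> < 1 / 4"
  using eps_pos by (simp_all add: \<theta>_def field_simps)

lemma q_gt_1: "1 < q"
proof -
  have "q = 1 + \<epsilon> / 2" using eps_pos by (simp add: q_def \<theta>_def field_simps)
  then show ?thesis using eps_pos by simp
qed

lemma summable_powr_q: "summable (\<lambda>n. real n powr - q)"
  using summable_real_powr_iff[of "- q"] q_gt_1 by simp

lemma summable_powr_q_shift: "summable (\<lambda>k. real (N + k) powr - q)"
  using summable_powr_q summable_iff_shift[of "\<lambda>n. real n powr - q" N] by (simp add: add.commute)

lemma powr_q_tail_le_Z: "(\<Sum>k. real (N + k) powr - q) \<le> Z"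
proof -
  have "(\<Sum>k. real (k + N) powr - q) = Z - (\<Sum>i<N. real i powr - q)"
    unfolding Z_def by (rule suminf_minus_initial_segment[OF summable_powr_q])
  moreover have "0 \<le> (\<Sum>i<N. real i powr - q)" by (simp add: sum_nonneg)
  ultimately show ?thesis by (simp add: add.commute)
qed

lemma Z_ge_1: "1 \<le> Z"
  using sum_le_suminf[OF summable_powr_q, of "{1}"] by (simp add: Z_def)

lemma t_nonneg: "0 \<le> t n"
  by (simp add: t_def)

lemma b_le: "\<forall>\<^sub>F n in sequentially. real (b n) \<le> 2 powr (A n powr \<kappa>)"
  using b_bound by (simp add: A_def)

lemma t_le: "\<forall>\<^sub>F n in sequentially. t n \<le> 2 powr (- \<theta> * A n) * real n powr - q"
proof -
  have "\<forall>\<^sub>F x in at_top. x powr \<kappa> \<le> \<theta> * x"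
    using kappa_less_1 theta_pos by real_asymp
  from eventually_compose_filterlim[OF this A_at_top]
  show ?thesis using A_ge_log b_le eventually_ge_at_top[of 1]
  proof eventually_elim
    case (elim n)
    have "q * log 2 (real n) \<le> (1 - 2 * \<theta>) * A n"
      using elim(2) theta_less by (simp add: q_def mult.assoc mult_left_mono)
    then have "A n powr \<kappa> - A n \<le> - \<theta> * A n + - q * log 2 (real n)"
      using elim(1) by (simp add: algebra_simps)
    have "t n \<le> 2 powr (A n powr \<kappa>) / 2 powr A n"
      using elim(3,4) a_eq_powr_A[of n] by (simp add: t_def divide_right_mono)
    also have "\<dots> = 2 powr (A n powr \<kappa> - A n)" by (simp add: powr_diff)
    also have "\<dots> \<le> 2 powr (- \<theta> * A n + - q * log 2 (real n))"
      using \<open>A n powr \<kappa> - A n \<le> _\<close> by simp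
    also have "\<dots> = 2 powr (- \<theta> * A n) * 2 powr (- q * log 2 (real n))"
      by (rule powr_add)
    also have "\<dots> = 2 powr (- \<theta> * A n) * real n powr - q"
      using elim(4) powr_powr[of 2 "log 2 (real n)" "- q"] by (simp add: mult.commute)
    finally show ?case .
  qed
qed

lemma summable_t: "summable t"
proof (rule summable_comparison_test_ev[OF _ summable_powr_q])
  show "\<forall>\<^sub>F n in sequentially. norm (t n) \<le> real n powr - q"
    using t_le eventually_ge_at_top[of 1]
  proof eventually_elim
    case (elim n)
    have "0 \<le> \<theta> * A n" using theta_pos A_nonneg[OF elim(2)] by simp
    then have "2 powr (- \<theta> * A n) \<le> 1" by (simp add: powr_minus_divide ge_one_powr_ge_zero)
    then have "2 powr (- \<theta> * A n) * real n powr - q \<le> real n powr - q"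
      using mult_right_mono[of _ 1 "real n powr - q"] by simp
    then show ?case using elim(1) t_nonneg[of n] by simp
  qed
qed

lemma summable_t_shift: "summable (\<lambda>k. t (N + k))"
  using summable_t by (simp add: add.commute)

lemma T_nonneg: "0 \<le> T N"
  unfolding T_def by (rule suminf_nonneg[OF summable_t_shift t_nonneg])

lemma T_split: "T N = (\<Sum>i<l. t (N + i)) + T (N + l)"
  using suminf_split_initial_segment[OF summable_t_shift, of N l]
  by (simp add: T_def add_ac)

lemma weighted_tail_eq:
  "ennreal (2 powr (real N ^ 2 * (log 2 (real (a (N - 1)))) powr c)
      * (\<Prod>n=1..N-1. real (a n)) powr (M + 1))
    * (\<Sum>k. ennreal \<bar>real (b (N + k)) / real (a (N + k))\<bar>)
  = ennreal (2 powr F N * T N)"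
proof -
  have "(\<Prod>n=1..N-1. real (a n)) = (\<Prod>n=1..N-1. 2 powr A n)"
    by (rule prod.cong) (auto simp: a_eq_powr_A)
  also have "\<dots> = 2 powr S (N - 1)" by (simp add: S_def powr_sum)
  finally have "(\<Prod>n=1..N-1. real (a n)) powr (M + 1) = 2 powr ((M + 1) * S (N - 1))"
    by (simp only: powr_powr mult.commute)
  then have "2 powr (real N ^ 2 * A (N - 1) powr c) * (\<Prod>n=1..N-1. real (a n)) powr (M + 1)
      = 2 powr F N"
    by (simp only: F_def powr_add)
  moreover have "(\<Sum>k. ennreal \<bar>real (b (N + k)) / real (a (N + k))\<bar>) = ennreal (T N)"
    using suminf_ennreal2[OF t_nonneg summable_t_shift] by (simp add: T_def t_def)
  ultimately show ?thesis
    using ennreal_mult''[OF T_nonneg] by (simp add: A_def)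
qed

lemma T_le: "\<forall>\<^sub>F N in sequentially. T N \<le> 2 powr (- \<theta> * A N) * Z"
  using eventually_all_ge_at_top[OF t_le] eventually_ge_at_top[of 1]
proof eventually_elim
  case (elim N)
  have "T N \<le> (\<Sum>k. 2 powr (- \<theta> * A N) * real (N + k) powr - q)"
    unfolding T_def
  proof (rule suminf_le)
    show "t (N + k) \<le> 2 powr (- \<theta> * A N) * real (N + k) powr - q" for k
    proof -
      have "t (N + k) \<le> 2 powr (- \<theta> * A (N + k)) * real (N + k) powr - q"
        using elim(1)[rule_format, of "N + k"] by simp
      also have "\<dots> \<le> 2 powr (- \<theta> * A N) * real (N + k) powr - q"
        using A_mono[of N "N + k"] elim(2) theta_pos by (intro mult_right_mono) simp_all
      finally show ?thesis .
    qed
  qed (use summable_t_shift summable_powr_q_shift in auto)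
  also have "\<dots> = 2 powr (- \<theta> * A N) * (\<Sum>k. real (N + k) powr - q)"
    by (rule suminf_mult[OF summable_powr_q_shift])
  also have "\<dots> \<le> 2 powr (- \<theta> * A N) * Z"
    using powr_q_tail_le_Z by (rule mult_left_mono) simp
  finally show ?case .
qed

lemma t_le_block: "\<forall>\<^sub>F N in sequentially. \<forall>n\<ge>N. t n \<le> 2 powr (A n powr \<kappa> - A N)"
  using eventually_all_ge_at_top[OF b_le] eventually_ge_at_top[of 1]
proof eventually_elim
  case (elim N)
  show ?case
  proof (intro allI impI)
    fix n assume "N \<le> n"
    have "t n \<le> real (b n) / real (a N)"
      unfolding t_def using a_mono[of N n] a_pos[of N] elim(2) \<open>N \<le> n\<close>
      by (intro divide_left_mono) auto
    also have "\<dots> \<le> 2 powr (A n powr \<kappa>) / 2 powr A N"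
      using elim \<open>N \<le> n\<close> a_eq_powr_A[of N] by (simp add: divide_right_mono)
    finally show "t n \<le> 2 powr (A n powr \<kappa> - A N)" by (simp add: powr_diff)
  qed
qed

definition m :: "nat \<Rightarrow> nat" where "m N = (LEAST n. N \<le> n \<and> 2 / \<theta> * A N \<le> A n)"

lemma m_spec: "N \<le> m N \<and> 2 / \<theta> * A N \<le> A (m N)"
proof -
  obtain n\<^sub>1 where "\<And>n. n\<^sub>1 \<le> n \<Longrightarrow> 2 / \<theta> * A N \<le> A n"
    using filterlim_at_top[THEN iffD1, OF A_at_top] by (auto simp: eventually_sequentially)
  then have "\<exists>n. N \<le> n \<and> 2 / \<theta> * A N \<le> A n" by (intro exI[of _ "max N n\<^sub>1"]) auto
  then show ?thesis unfolding m_def by (rule LeastI_ex)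
qed

lemma A_before_m: "N \<le> n \<Longrightarrow> n < m N \<Longrightarrow> A n < 2 / \<theta> * A N"
  using not_less_Least[of n "\<lambda>n. N \<le> n \<and> 2 / \<theta> * A N \<le> A n"] by (auto simp: m_def)

lemma T_le_block:
  "\<forall>\<^sub>F N in sequentially.
     T N \<le> real (m N - N) * 2 powr ((2 / \<theta> * A N) powr \<kappa> - A N) + 2 powr (- 2 * A N) * Z"
  using t_le_block eventually_all_ge_at_top[OF T_le] eventually_ge_at_top[of 1]
proof eventually_elim
  case (elim N)
  define l where "l = m N - N"
  have "t (N + i) \<le> 2 powr ((2 / \<theta> * A N) powr \<kappa> - A N)" if "i < l" for i
  proof -
    have "N + i < m N" using that by (simp add: l_def)
    then have "A (N + i) powr \<kappa> \<le> (2 / \<theta> * A N) powr \<kappa>"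
      using A_before_m[of N "N + i"] A_nonneg[of "N + i"] elim(3) kappa_pos
      by (intro powr_mono2) auto
    then have "2 powr (A (N + i) powr \<kappa> - A N) \<le> 2 powr ((2 / \<theta> * A N) powr \<kappa> - A N)"
      by simp
    then show ?thesis using elim(1)[rule_format, of "N + i"] by linarith
  qed
  then have "(\<Sum>i<l. t (N + i)) \<le> real l * 2 powr ((2 / \<theta> * A N) powr \<kappa> - A N)"
    using sum_bounded_above[of "{..<l}" "\<lambda>i. t (N + i)"] by simp
  moreover have "T (m N) \<le> 2 powr (- 2 * A N) * Z"
  proof -
    have "\<theta> * (2 / \<theta> * A N) \<le> \<theta> * A (m N)"
      using m_spec[of N] theta_pos by (intro mult_left_mono) auto
    then have "- \<theta> * A (m N) \<le> - 2 * A N"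
      using theta_pos by simp
    have "T (m N) \<le> 2 powr (- \<theta> * A (m N)) * Z"
      using elim(2) m_spec[of N] by simp
    also have "\<dots> \<le> 2 powr (- 2 * A N) * Z"
      using \<open>- \<theta> * A (m N) \<le> - 2 * A N\<close> Z_ge_1 by (intro mult_right_mono) auto
    finally show ?thesis .
  qed
  ultimately show ?case
    using T_split[of N l] m_spec[of N] by (simp add: l_def)
qed

definition L :: real where "L = M + 2"
definition R :: "nat \<Rightarrow> real" where "R n = S n / L ^ n"
definition r :: "nat \<Rightarrow> real" where "r n = A n / L ^ n"
definition \<omega> :: "nat \<Rightarrow> real" where "\<omega> N = real N ^ 2 * (L powr (c - 1)) ^ N"
definition \<psi> :: "nat \<Rightarrow> real" where "\<psi> N = (L powr (\<kappa> - 1)) ^ N"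

lemma L_ge_2: "2 \<le> L"
  using M_nonneg by (simp add: L_def)

lemma L_power_pos: "0 < L ^ n"
  using L_ge_2 by simp

lemma S_Suc: "S (Suc n) = S n + A (Suc n)"
  by (simp add: S_def)

lemma S_add: "S (j + k) = S j + (\<Sum>i<k. A (j + 1 + i))"
  by (induction k) (simp_all add: S_Suc)

lemma S_nonneg: "0 \<le> S n"
  unfolding S_def by (rule sum_nonneg) (simp add: A_nonneg)

lemma A_le_S: "1 \<le> n \<Longrightarrow> A n \<le> S n"
  using S_Suc[of "n - 1"] S_nonneg[of "n - 1"] by simp

lemma R_nonneg: "0 \<le> R n"
  using S_nonneg[of n] L_power_pos[of n] by (simp add: R_def)

lemma r_le_R: "1 \<le> n \<Longrightarrow> r n \<le> R n"
  unfolding r_def R_def using L_power_pos[of n] by (intro divide_right_mono A_le_S) auto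

lemma r_nonneg: "1 \<le> n \<Longrightarrow> 0 \<le> r n"
  using A_nonneg[of n] L_power_pos[of n] by (simp add: r_def)

lemma S_div_power: "1 \<le> N \<Longrightarrow> S (N - 1) / L ^ N = R (N - 1) / L"
  by (cases N) (simp_all add: R_def)

lemma F_div_power_le:
  assumes "2 \<le> N"
  shows "F N / L ^ N \<le> \<omega> N * (R (N - 1) + 1) + (M + 1) / L * R (N - 1)"
proof -
  have "A (N - 1) / L ^ N \<le> S (N - 1) / L ^ N"
    using A_le_S[of "N - 1"] assms L_power_pos[of N] by (simp add: divide_right_mono)
  also have "\<dots> = R (N - 1) / L" using S_div_power[of N] assms by simp
  also have "\<dots> \<le> R (N - 1) / 1"
    using R_nonneg L_ge_2 by (intro divide_left_mono) auto
  finally have "A (N - 1) / L ^ N \<le> R (N - 1)" by simp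
  have "A (N - 1) powr c / L ^ N \<le> (A (N - 1) / L ^ N + 1) * (L ^ N) powr (c - 1)"
    using assms by (intro powr_div_le A_nonneg L_power_pos c_pos c_less_1) simp
  also have "\<dots> \<le> (R (N - 1) + 1) * (L ^ N) powr (c - 1)"
    using \<open>A (N - 1) / L ^ N \<le> R (N - 1)\<close> by (intro mult_right_mono) auto
  finally have "A (N - 1) powr c / L ^ N \<le> (R (N - 1) + 1) * (L ^ N) powr (c - 1)" .
  then have "real N ^ 2 * (A (N - 1) powr c / L ^ N)
      \<le> real N ^ 2 * ((R (N - 1) + 1) * (L ^ N) powr (c - 1))"
    by (rule mult_left_mono) simp
  also have "\<dots> = \<omega> N * (R (N - 1) + 1)"
    using L_ge_2 by (simp add: \<omega>_def power_powr_eq_powr_power)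
  finally have "real N ^ 2 * (A (N - 1) powr c / L ^ N) \<le> \<omega> N * (R (N - 1) + 1)" .
  moreover have "F N / L ^ N = real N ^ 2 * (A (N - 1) powr c / L ^ N) + (M + 1) * (S (N - 1) / L ^ N)"
    by (simp add: F_def add_divide_distrib)
  moreover have "(M + 1) * (S (N - 1) / L ^ N) = (M + 1) / L * R (N - 1)"
    using S_div_power[of N] assms by simp
  ultimately show ?thesis by linarith
qed

lemma \<omega>_nonneg: "0 \<le> \<omega> N"
  by (simp add: \<omega>_def)

lemma \<psi>_nonneg: "0 \<le> \<psi> N"
  by (simp add: \<psi>_def)

lemma summable_\<omega>: "summable \<omega>"
  unfolding \<omega>_def
  using L_ge_2 c_less_1 by (intro summable_power_mult_geometric powr_less_one) auto

lemma \<omega>_le_1: "\<forall>\<^sub>F N in sequentially. \<omega> N \<le> 1"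
  using order_tendstoD(2)[OF summable_LIMSEQ_zero[OF summable_\<omega>], of 1] by (auto elim: eventually_mono)

lemma summable_\<psi>: "summable \<psi>"
  unfolding \<psi>_def using L_ge_2 kappa_less_1 by (intro summable_geometric) (simp add: powr_less_one)

lemma summable_inverse_power: "summable (\<lambda>N. 1 / L ^ N)"
  using summable_geometric[of "1 / L"] L_ge_2 by (simp add: power_one_over)

lemma S_before_m_le:
  assumes "1 \<le> N" "N + l \<le> m N"
  shows "S (N - 1 + l) \<le> S (N - 1) + real l * (2 / \<theta> * A N)"
proof -
  have "A (N - 1 + 1 + i) \<le> 2 / \<theta> * A N" if "i < l" for i
    using A_before_m[of N "N + i"] assms that by simp
  then have "(\<Sum>i<l. A (N - 1 + 1 + i)) \<le> (\<Sum>i<l. 2 / \<theta> * A N)"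
    by (intro sum_mono) simp
  then show ?thesis by (simp add: S_add)
qed

definition l\<^sub>0 :: nat where
  "l\<^sub>0 = (LEAST l\<^sub>0. 1 \<le> l\<^sub>0 \<and> (\<forall>l\<ge>l\<^sub>0. 8 * real l * L \<le> \<theta>\<^sup>2 * L ^ l))"

lemma l\<^sub>0_spec: "1 \<le> l\<^sub>0 \<and> (\<forall>l\<ge>l\<^sub>0. 8 * real l * L \<le> \<theta>\<^sup>2 * L ^ l)"
proof -
  have "\<forall>\<^sub>F l in sequentially. 8 * real l * L \<le> \<theta>\<^sup>2 * L ^ l"
    using L_ge_2 theta_pos by real_asymp
  then obtain l\<^sub>1 where "\<forall>l\<ge>l\<^sub>1. 8 * real l * L \<le> \<theta>\<^sup>2 * L ^ l"
    by (auto simp: eventually_sequentially)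
  then have "\<exists>l\<^sub>0. 1 \<le> l\<^sub>0 \<and> (\<forall>l\<ge>l\<^sub>0. 8 * real l * L \<le> \<theta>\<^sup>2 * L ^ l)"
    by (intro exI[of _ "max 1 l\<^sub>1"]) auto
  then show ?thesis unfolding l\<^sub>0_def by (rule LeastI_ex)
qed

end

section \<open>A lower bound on the weighted tail forces bounded growth\<close>

locale sparse_series_lower_tail = sparse_series +
  fixes \<delta> :: real
  assumes delta_pos: "0 < \<delta>"
    and weighted_tail_lower: "\<forall>\<^sub>F N in sequentially. \<delta> < 2 powr F N * T N"
begin

definition C :: real where "C = \<bar>log 2 (\<delta> / Z)\<bar>"

lemma theta_A_le_F: "\<forall>\<^sub>F N in sequentially. \<theta> * A N \<le> F N + C"
  using weighted_tail_lower T_le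
proof eventually_elim
  case (elim N)
  have "\<delta> < 2 powr F N * (2 powr (- \<theta> * A N) * Z)"
    using elim by (meson less_le_trans mult_left_mono powr_ge_zero)
  also have "\<dots> = 2 powr (F N - \<theta> * A N) * Z"
    by (simp add: powr_diff powr_minus_divide)
  finally have "\<delta> / Z < 2 powr (F N - \<theta> * A N)"
    using Z_ge_1 by (simp add: pos_divide_less_eq)
  then have "log 2 (\<delta> / Z) < F N - \<theta> * A N"
    using delta_pos Z_ge_1 by (subst log_less_iff) auto
  then show ?case unfolding C_def by linarith
qed

lemma r_le: "\<forall>\<^sub>F N in sequentially. r N \<le> (2 * R (N - 1) + \<omega> N + C / L ^ N) / \<theta>"
  using theta_A_le_F \<omega>_le_1 eventually_ge_at_top[of 2]
proof eventually_elim
  case (elim N)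
  have "\<theta> * r N \<le> (F N + C) / L ^ N"
    using elim(1) L_power_pos[of N] by (simp add: r_def divide_right_mono)
  also have "\<dots> \<le> \<omega> N * (R (N - 1) + 1) + (M + 1) / L * R (N - 1) + C / L ^ N"
    using F_div_power_le[OF elim(3)] by (simp add: add_divide_distrib)
  also have "\<dots> \<le> 2 * R (N - 1) + \<omega> N + C / L ^ N"
  proof -
    have "\<omega> N * R (N - 1) \<le> R (N - 1)"
      using elim(2) \<omega>_nonneg R_nonneg by (intro mult_left_le_one_le)
    moreover have "(M + 1) / L * R (N - 1) \<le> R (N - 1)"
      using M_nonneg R_nonneg by (intro mult_left_le_one_le) (auto simp: L_def)
    ultimately show ?thesis by (simp add: distrib_left)
  qed
  finally show ?case using theta_pos by (simp add: pos_le_divide_eq mult.commute)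
qed

lemma r_le_const: "\<forall>\<^sub>F N in sequentially. r N \<le> (2 * R (N - 1) + 1 + C) / \<theta>"
  using r_le \<omega>_le_1
proof eventually_elim
  case (elim N)
  have "C / L ^ N \<le> C / 1"
    using L_ge_2 by (intro divide_left_mono one_le_power) (auto simp: C_def)
  then have "2 * R (N - 1) + \<omega> N + C / L ^ N \<le> 2 * R (N - 1) + 1 + C"
    using elim(2) by simp
  then show ?case
    using elim(1) theta_pos by (meson divide_right_mono less_imp_le order_trans)
qed

lemma r_before_m_le:
  "\<forall>\<^sub>F N in sequentially.
     \<forall>n. N \<le> n \<longrightarrow> n < m N \<longrightarrow> r n \<le> 4 / \<theta>\<^sup>2 * R (N - 1) + 2 / \<theta>\<^sup>2 * (1 + C)"
  using r_le_const eventually_ge_at_top[of 1]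
proof eventually_elim
  case (elim N)
  show ?case
  proof (intro allI impI)
    fix n assume n: "N \<le> n" "n < m N"
    have "r n \<le> (2 / \<theta> * A N) / L ^ N"
      unfolding r_def using A_before_m[OF n] A_nonneg[of N] elim(2) theta_pos L_power_pos n(1) L_ge_2
      by (intro frac_le power_increasing) auto
    also have "\<dots> = 2 / \<theta> * r N" by (simp add: r_def)
    also have "\<dots> \<le> 2 / \<theta> * ((2 * R (N - 1) + 1 + C) / \<theta>)"
      using elim(1) theta_pos by (intro mult_left_mono) auto
    also have "\<dots> = 4 / \<theta>\<^sup>2 * R (N - 1) + 2 / \<theta>\<^sup>2 * (1 + C)"
      using theta_pos by (simp add: field_simps power2_eq_square)
    finally show "r n \<le> 4 / \<theta>\<^sup>2 * R (N - 1) + 2 / \<theta>\<^sup>2 * (1 + C)" .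
  qed
qed

text \<open>\<open>\<Lambda>\<close> makes both parts of the tail at a jump, the block and what follows it, smaller than
  \<open>\<delta> / 2\<close> unless the block is longer than \<open>l\<^sub>0\<close>.\<close>

definition \<Lambda> :: real where "\<Lambda> = \<bar>log 2 (\<delta> / (2 * Z))\<bar> + \<bar>log 2 (\<delta> / (2 * real l\<^sub>0))\<bar>"

definition jump :: "nat \<Rightarrow> bool" where "jump N \<longleftrightarrow> F N + (2 / \<theta> * A N) powr \<kappa> + \<Lambda> \<le> A N"

definition \<beta> :: "nat \<Rightarrow> real" where "\<beta> N = \<omega> N + 4 / \<theta>\<^sup>2 * \<psi> N"
definition \<gamma> :: "nat \<Rightarrow> real" where
  "\<gamma> N = \<omega> N + (1 + 2 / \<theta>\<^sup>2 * (1 + C)) * \<psi> N + \<Lambda> / L ^ N + C / L ^ N"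

lemma C_nonneg: "0 \<le> C" and \<Lambda>_nonneg: "0 \<le> \<Lambda>"
  by (simp_all add: C_def \<Lambda>_def)

lemma \<beta>_nonneg: "0 \<le> \<beta> N"
  using \<omega>_nonneg \<psi>_nonneg by (simp add: \<beta>_def)

lemma \<gamma>_nonneg: "0 \<le> \<gamma> N"
  using \<omega>_nonneg \<psi>_nonneg C_nonneg \<Lambda>_nonneg L_power_pos[of N] by (simp add: \<gamma>_def)

lemma summable_\<beta>: "summable \<beta>"
  unfolding \<beta>_def by (intro summable_add summable_mult summable_\<omega> summable_\<psi>)

lemma summable_\<gamma>: "summable \<gamma>"
proof -
  have "summable (\<lambda>N. x / L ^ N)" for x
    using summable_mult[OF summable_inverse_power, of x] by simp
  then show ?thesis
    unfolding \<gamma>_def by (intro summable_add summable_mult summable_\<omega> summable_\<psi>)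
qed

lemma quarter_le_\<gamma>: "(\<omega> N + C / L ^ N) / 4 \<le> \<gamma> N"
proof -
  have quarter: "(x + y) / 4 \<le> x + z + w + y"
    if "0 \<le> x" "0 \<le> y" "0 \<le> z" "0 \<le> w" for x y z w :: real
    using that by simp
  show ?thesis
    unfolding \<gamma>_def
    by (rule quarter) (use \<omega>_nonneg \<psi>_nonneg C_nonneg \<Lambda>_nonneg L_power_pos[of N] in simp_all)
qed

lemma jump_block_long: "\<forall>\<^sub>F N in sequentially. jump N \<longrightarrow> l\<^sub>0 < m N - N"
  using weighted_tail_lower T_le_block eventually_ge_at_top[of 1]
proof eventually_elim
  case (elim N)
  show ?case
  proof
    assume "jump N"
    define l where "l = m N - N"
    define J where "J = (2 / \<theta> * A N) powr \<kappa>"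
    have l\<^sub>0: "0 < real l\<^sub>0" using l\<^sub>0_spec by simp
    have "F N + J - A N \<le> log 2 (\<delta> / (2 * real l\<^sub>0))"
      using \<open>jump N\<close> by (simp add: jump_def J_def \<Lambda>_def)
    then have block: "2 powr (F N + J - A N) \<le> \<delta> / (2 * real l\<^sub>0)"
      using delta_pos l\<^sub>0 by (subst powr_le_iff) auto
    have "F N - 2 * A N \<le> log 2 (\<delta> / (2 * Z))"
      using \<open>jump N\<close> A_nonneg[OF elim(3)] powr_ge_zero[of "2 / \<theta> * A N" \<kappa>]
        abs_ge_minus_self[of "log 2 (\<delta> / (2 * Z))"] abs_ge_zero[of "log 2 (\<delta> / (2 * real l\<^sub>0))"]
      unfolding jump_def \<Lambda>_def by linarith
    then have "2 powr (F N - 2 * A N) \<le> \<delta> / (2 * Z)"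
      using delta_pos Z_ge_1 by (subst powr_le_iff) auto
    then have tail: "2 powr (F N - 2 * A N) * Z \<le> \<delta> / 2"
      using Z_ge_1 by (simp add: pos_le_divide_eq)
    have "\<delta> < 2 powr F N * (real l * 2 powr (J - A N) + 2 powr (- 2 * A N) * Z)"
      using elim(1,2) by (simp add: J_def l_def) (meson less_le_trans mult_left_mono powr_ge_zero)
    also have "\<dots> = real l * 2 powr (F N + J - A N) + 2 powr (F N - 2 * A N) * Z"
      by (simp add: algebra_simps powr_add[symmetric])
    also have "\<dots> \<le> real l * (\<delta> / (2 * real l\<^sub>0)) + \<delta> / 2"
      using block tail by (intro add_mono mult_left_mono) auto
    finally have "\<delta> * real l\<^sub>0 < real l * \<delta>"
      using l\<^sub>0 by (simp add: field_simps)
    then show "l\<^sub>0 < m N - N" using delta_pos by (simp add: l_def)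
  qed
qed

lemma R_after_jump:
  "\<forall>\<^sub>F N in sequentially. jump N \<longrightarrow> R (m N - 1) \<le> R (N - 1) + \<gamma> N"
  using jump_block_long r_le eventually_ge_at_top[of 1]
proof eventually_elim
  case (elim N)
  show ?case
  proof
    assume "jump N"
    define l where "l = m N - N"
    have "l\<^sub>0 < l" using elim(1) \<open>jump N\<close> by (simp add: l_def)
    then have "1 \<le> l" and l_bound: "8 * real l * L \<le> \<theta>\<^sup>2 * L ^ l" using l\<^sub>0_spec by auto
    have mN: "m N - 1 = N - 1 + l" using \<open>l\<^sub>0 < l\<close> elim(3) by (simp add: l_def)
    have LN: "L ^ N = L ^ (N - 1) * L" using elim(3) by (cases N) (simp_all add: power_Suc2)
    have "R (m N - 1) \<le> (S (N - 1) + real l * (2 / \<theta> * A N)) / (L ^ (N - 1) * L ^ l)"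
      unfolding R_def mN power_add using S_before_m_le[of N l] elim(3) \<open>l\<^sub>0 < l\<close> L_ge_2
      by (intro divide_right_mono) (auto simp: l_def)
    also have "\<dots> = R (N - 1) / L ^ l + 2 / \<theta> * ((real l * L / L ^ l) * r N)"
      using LN L_power_pos[of "N - 1"] L_power_pos[of l] L_ge_2
      by (simp add: R_def r_def field_simps)
    also have "\<dots> \<le> R (N - 1) / 2 + 2 / \<theta> * (\<theta>\<^sup>2 / 8 * ((2 * R (N - 1) + \<omega> N + C / L ^ N) / \<theta>))"
    proof (intro add_mono mult_left_mono)
      have "L ^ 1 \<le> L ^ l" using \<open>1 \<le> l\<close> L_ge_2 by (intro power_increasing) auto
      then show "R (N - 1) / L ^ l \<le> R (N - 1) / 2"
        using R_nonneg L_ge_2 by (intro divide_left_mono) auto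
      have "real l * L / L ^ l \<le> \<theta>\<^sup>2 / 8"
        using l_bound L_power_pos[of l] by (simp add: field_simps)
      then show "real l * L / L ^ l * r N \<le> \<theta>\<^sup>2 / 8 * ((2 * R (N - 1) + \<omega> N + C / L ^ N) / \<theta>)"
        using elim(2) r_nonneg[OF elim(3)] by (intro mult_mono) auto
    qed (use theta_pos in auto)
    also have "\<dots> = R (N - 1) + (\<omega> N + C / L ^ N) / 4"
      using theta_pos by (simp add: field_simps power2_eq_square)
    also have "\<dots> \<le> R (N - 1) + \<gamma> N"
      using quarter_le_\<gamma> by simp
    finally show "R (m N - 1) \<le> R (N - 1) + \<gamma> N" .
  qed
qed

lemma R_step: "\<forall>\<^sub>F N in sequentially. \<not> jump N \<longrightarrow> R N \<le> (1 + \<beta> N) * R (N - 1) + \<gamma> N"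
  using r_le_const eventually_ge_at_top[of 2]
proof eventually_elim
  case (elim N)
  show ?case
  proof
    assume "\<not> jump N"
    then have r_split: "r N \<le> F N / L ^ N + (2 / \<theta> * A N) powr \<kappa> / L ^ N + \<Lambda> / L ^ N"
      using L_power_pos[of N] unfolding r_def jump_def add_divide_distrib[symmetric]
      by (intro divide_right_mono) auto
    have "(2 / \<theta> * A N) powr \<kappa> / L ^ N \<le> (2 / \<theta> * A N / L ^ N + 1) * (L ^ N) powr (\<kappa> - 1)"
      using elim(2) theta_pos A_nonneg[of N]
      by (intro powr_div_le L_power_pos kappa_pos kappa_less_1) auto
    then have J: "(2 / \<theta> * A N) powr \<kappa> / L ^ N \<le> 2 / \<theta> * r N * \<psi> N + \<psi> N"
      using L_ge_2 by (simp add: r_def \<psi>_def power_powr_eq_powr_power algebra_simps)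
    have r: "2 / \<theta> * r N * \<psi> N \<le> 4 / \<theta>\<^sup>2 * \<psi> N * R (N - 1) + 2 / \<theta>\<^sup>2 * (1 + C) * \<psi> N"
    proof -
      have "2 / \<theta> * r N * \<psi> N \<le> 2 / \<theta> * ((2 * R (N - 1) + 1 + C) / \<theta>) * \<psi> N"
        using elim(1) theta_pos \<psi>_nonneg[of N] by (intro mult_right_mono mult_left_mono) auto
      also have "\<dots> = 4 / \<theta>\<^sup>2 * \<psi> N * R (N - 1) + 2 / \<theta>\<^sup>2 * (1 + C) * \<psi> N"
        using theta_pos by (simp add: field_simps power2_eq_square)
      finally show ?thesis .
    qed
    have R_eq: "R N = R (N - 1) / L + r N"
      using S_Suc[of "N - 1"] S_div_power[of N] elim(2) by (simp add: R_def r_def add_divide_distrib)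
    \<comment> \<open>this is where \<open>L = M + 2\<close> is needed\<close>
    have "R (N - 1) / L + (M + 1) / L * R (N - 1) = (M + 2) / L * R (N - 1)"
      using L_ge_2 by (simp add: field_simps)
    then have L_eq: "R (N - 1) / L + (M + 1) / L * R (N - 1) = R (N - 1)"
      using L_ge_2 by (simp add: L_def)
    have goal_eq: "(1 + \<beta> N) * R (N - 1) + \<gamma> N
        = R (N - 1) + \<omega> N * (R (N - 1) + 1) + 4 / \<theta>\<^sup>2 * \<psi> N * R (N - 1)
          + 2 / \<theta>\<^sup>2 * (1 + C) * \<psi> N + \<psi> N + \<Lambda> / L ^ N + C / L ^ N"
      by (simp add: \<beta>_def \<gamma>_def algebra_simps)
    have "0 \<le> C / L ^ N" using C_nonneg L_power_pos[of N] by simp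
    then show "R N \<le> (1 + \<beta> N) * R (N - 1) + \<gamma> N"
      using R_eq r_split F_div_power_le[OF elim(2)] J r L_eq goal_eq by linarith
  qed
qed

lemma r_bounded: "\<exists>B. \<forall>\<^sub>F n in sequentially. r n \<le> B"
proof -
  have "\<forall>\<^sub>F N in sequentially. 1 \<le> N \<and> (\<not> jump N \<longrightarrow> R N \<le> (1 + \<beta> N) * R (N - 1) + \<gamma> N)
      \<and> (jump N \<longrightarrow> l\<^sub>0 < m N - N \<and> R (m N - 1) \<le> R (N - 1) + \<gamma> N)
      \<and> (\<forall>n. N \<le> n \<longrightarrow> n < m N \<longrightarrow> r n \<le> 4 / \<theta>\<^sup>2 * R (N - 1) + 2 / \<theta>\<^sup>2 * (1 + C))"
    (is "eventually ?P _")
    using eventually_ge_at_top[of 1] R_step jump_block_long R_after_jump r_before_m_le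
    by eventually_elim blast
  then obtain n\<^sub>0 where n\<^sub>0: "\<And>N. n\<^sub>0 \<le> N \<Longrightarrow> ?P N"
    by (auto simp: eventually_sequentially)
  have "\<exists>B. \<forall>n\<ge>n\<^sub>0. r n \<le> B"
  proof (rule bounded_if_recurrence_with_jumps[OF R_nonneg \<beta>_nonneg summable_\<beta> \<gamma>_nonneg summable_\<gamma>,
        where m = m and jump = jump and C = "4 / \<theta>\<^sup>2" and D = "2 / \<theta>\<^sup>2 * (1 + C)"])
    show "r n \<le> R n" if "n\<^sub>0 \<le> n" for n
      using n\<^sub>0[OF that] r_le_R by blast
    show "N + 2 \<le> m N" if "n\<^sub>0 < N" "jump N" for N
      using n\<^sub>0[of N] that l\<^sub>0_spec by auto
  qed (use n\<^sub>0 in auto)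
  then show ?thesis by (auto simp: eventually_sequentially)
qed

lemma limsup_root_a_finite: "limsup (\<lambda>n. ereal (real (a n) powr ((M + 2) powr - real n))) < \<infinity>"
proof -
  obtain B where B: "\<forall>\<^sub>F n in sequentially. r n \<le> B" using r_bounded by blast
  have "\<forall>\<^sub>F n in sequentially. ereal (real (a n) powr ((M + 2) powr - real n)) \<le> ereal (2 powr B)"
    using B eventually_ge_at_top[of 1]
  proof eventually_elim
    case (elim n)
    have "(M + 2) powr - real n = 1 / L ^ n"
      using L_ge_2 by (simp add: L_def powr_minus_divide powr_realpow)
    then have "real (a n) powr ((M + 2) powr - real n) = 2 powr r n"
      using a_eq_powr_A[OF elim(2)] by (simp add: r_def powr_powr)
    then show ?case using elim(1) by simp
  qed
  then have "limsup (\<lambda>n. ereal (real (a n) powr ((M + 2) powr - real n))) \<le> ereal (2 powr B)"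
    by (rule Limsup_bounded)
  then show ?thesis using order.strict_trans1 by fastforce
qed

end

theorem lemma1:
  fixes \<epsilon> \<kappa> M c :: real and a b :: "nat \<Rightarrow> nat"
  assumes "\<epsilon> > 0" and "0 < \<kappa>" and "\<kappa> < 1" and "M \<ge> 0"
    and "\<And>n. n \<ge> 1 \<Longrightarrow> a n > 0" and "\<And>n. n \<ge> 1 \<Longrightarrow> b n > 0"
    and "\<And>m n. 1 \<le> m \<Longrightarrow> m \<le> n \<Longrightarrow> a m \<le> a n"
    and "limsup (\<lambda>n. ereal (real (a n) powr ((M + 2) powr (- real n)))) = \<infinity>"
    and "\<forall>\<^sub>F n in sequentially. real (a n) \<ge> real n powr (1 + \<epsilon>)"
    and "\<forall>\<^sub>F n in sequentially. real (b n) \<le> 2 powr ((log 2 (real (a n))) powr \<kappa>)"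
    and "0 < c" and "c < 1"
  shows "liminf (\<lambda>N. ennreal (2 powr (real N ^ 2 * (log 2 (real (a (N - 1)))) powr c)
            * (\<Prod>n=1..N-1. real (a n)) powr (M + 1))
          * (\<Sum>k. ennreal \<bar>real (b (N + k)) / real (a (N + k))\<bar>)) = 0"
proof (rule ccontr)
  assume liminf_pos: "\<not> ?thesis"
  interpret sparse_series \<epsilon> \<kappa> M c a b
    by unfold_locales (use assms in auto)
  obtain \<delta> where "0 < \<delta>" "\<forall>\<^sub>F N in sequentially. \<delta> < 2 powr F N * T N"
    by (rule liminf_ennreal_pos_imp_eventually_gt[OF liminf_pos[unfolded weighted_tail_eq]])
  then interpret sparse_series_lower_tail \<epsilon> \<kappa> M c a b \<delta>
    by unfold_locales
  show False
    using limsup_root_a_finite assms(8) by simp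
qed

end
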